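(* Let $(V,q)$ be a Minkowski space whose dimension is greater than $3$. Let $a,b,c$ be pairwise non-collinear vectors in $\mathcal{C}(0)$. Then there exists $d\in V\setminus\mathcal{C}(0)$ such that $q(d-a)=q(d-b)=q(d-c)=0$.
   Context: A Minkowski space is a pair $(V,q)$ where $V$ is a finite-dimensional real vector space of dimension $n>1$ and $q$ is a quadratic form on $V$ of signature $(1,n-1)$. $\mathcal{C}(0)=\{m\in V: q(m)=0\}$. *)

theory Defs
  imports "HOL-Analysis.Analysis"
begin

definition quadratic_form :: "('a::real_vector \<Rightarrow> real) \<Rightarrow> bool" where
  "quadratic_form q \<longleftrightarrow>
     (\<exists>B :: 'a \<Rightarrow> 'a \<Rightarrow> real. bilinear B \<and> (\<forall>x y. B x y = B y x) \<and> (\<forall>x. q x = B x x))"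

definition signature_1_nm1 :: "('a::euclidean_space \<Rightarrow> real) \<Rightarrow> bool" where
  "signature_1_nm1 q \<longleftrightarrow>
     (\<exists>e :: nat \<Rightarrow> 'a.
        inj_on e {..<DIM('a)} \<and> independent (e ` {..<DIM('a)}) \<and>
        span (e ` {..<DIM('a)}) = UNIV \<and>
        (\<forall>x :: nat \<Rightarrow> real.
           q (\<Sum>i<DIM('a). x i *\<^sub>R e i) = (x 0)\<^sup>2 - (\<Sum>i\<in>{1..<DIM('a)}. (x i)\<^sup>2)))"

definition minkowski_space :: "('a::euclidean_space \<Rightarrow> real) \<Rightarrow> bool" where
  "minkowski_space q \<longleftrightarrow> DIM('a) > 1 \<and> quadratic_form q \<and> signature_1_nm1 q"

definition light_cone :: "('a::real_vector \<Rightarrow> real) \<Rightarrow> 'a set" where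
  "light_cone q = {m. q m = 0}"

end

theory Submission
  imports Defs
begin

text \<open>Write B for the polar form of q and u0 for the time coordinate of u in a Sylvester
  basis. If u, v are isotropic and B u v = 0, then v0 u - u0 v is isotropic with vanishing time
  coordinate, hence 0; so non-collinear isotropic vectors are never orthogonal. Consequently
  B a b, B a c, B b c are nonzero and some combination d of a, b, c satisfies
  B d a = B d b = B d c = 1. As dim V > 3 there is a vector w \<noteq> 0 orthogonal to a, b, c; it is
  anisotropic by the first remark, and q (d + w) + q (d - w) = 2 q d + 2 q w shows that one of
  d, d + w, d - w is anisotropic. Finally, for isotropic x with B d x = 1,
  q (t d - x) = t (t q d - 2), which vanishes for t = 2 / q d.\<close>

lemma linear_nontrivial_kernel:
  fixes f :: "'a::euclidean_space \<Rightarrow> 'b::euclidean_space"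
  assumes "linear f" "DIM('b) < DIM('a)"
  shows "\<exists>w. w \<noteq> 0 \<and> f w = 0"
proof (rule ccontr)
  assume "\<not> ?thesis"
  then have "inj f" using assms(1) by (metis linear_injective_0)
  then have "dim (range f) = dim (UNIV :: 'a set)"
    using assms(1) by (intro dim_image_eq) (auto simp: inj_on_def inj_def)
  moreover have "dim (range f) \<le> DIM('b)" by (metis dim_subset_UNIV)
  ultimately show False using assms(2) by simp
qed

lemma bilinear_exists_orthogonal_to_three:
  fixes B :: "'a::euclidean_space \<Rightarrow> 'a \<Rightarrow> real"
  assumes "bilinear B" "DIM('a) > 3"
  shows "\<exists>w. w \<noteq> 0 \<and> B w a = 0 \<and> B w b = 0 \<and> B w c = 0"
proof -
  have "linear (\<lambda>w. (B w a, B w b, B w c))"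
    using assms(1)
    by (intro linearI) (simp_all add: bilinear_ladd bilinear_lmul)
  then show ?thesis
    using linear_nontrivial_kernel[of "\<lambda>w. (B w a, B w b, B w c)"] assms(2)
    by (auto simp: zero_prod_def)
qed

lemma span_eq_UNIV_imp_coordinates:
  fixes e :: "nat \<Rightarrow> 'a::real_vector"
  assumes "inj_on e {..<n}" "span (e ` {..<n}) = UNIV"
  shows "\<exists>x. v = (\<Sum>i<n. x i *\<^sub>R e i)"
proof -
  have "v \<in> range (\<lambda>u. \<Sum>w\<in>e ` {..<n}. u w *\<^sub>R w)"
    using span_finite[of "e ` {..<n}"] assms(2) by simp
  then obtain u where "v = (\<Sum>w\<in>e ` {..<n}. u w *\<^sub>R w)"
    by blast
  also have "\<dots> = (\<Sum>i<n. u (e i) *\<^sub>R e i)"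
    using assms(1) by (simp add: sum.reindex)
  finally show ?thesis
    by (rule exI[where x = "\<lambda>i. u (e i)"])
qed

locale symmetric_bilinear_form =
  fixes q :: "'a::real_vector \<Rightarrow> real" and B :: "'a \<Rightarrow> 'a \<Rightarrow> real"
  assumes bilinear: "bilinear B"
    and symmetric: "\<And>x y. B x y = B y x"
    and q_eq: "\<And>x. q x = B x x"
begin

lemma B_add_left: "B (x + y) z = B x z + B y z"
  using bilinear by (rule bilinear_ladd)

lemma B_diff_left: "B (x - y) z = B x z - B y z"
  using bilinear by (rule bilinear_lsub)

lemma B_diff_right: "B z (x - y) = B z x - B z y"
  using bilinear by (rule bilinear_rsub)

lemma B_scaleR_left: "B (t *\<^sub>R x) y = t * B x y"
  using bilinear_lmul[OF bilinear] by simp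

lemma B_scaleR_right: "B x (t *\<^sub>R y) = t * B x y"
  using bilinear_rmul[OF bilinear] by simp

lemma q_add: "q (x + y) = q x + 2 * B x y + q y"
  using symmetric[of y x] bilinear_radd[OF bilinear]
  by (simp add: q_eq B_add_left algebra_simps)

lemma q_diff: "q (x - y) = q x - 2 * B x y + q y"
  using symmetric[of y x] by (simp add: q_eq B_diff_left B_diff_right algebra_simps)

lemma q_scaleR: "q (t *\<^sub>R x) = t\<^sup>2 * q x"
  by (simp add: q_eq B_scaleR_left B_scaleR_right power2_eq_square)

lemma exists_dual_to_isotropic_triple:
  assumes "q a = 0" "q b = 0" "q c = 0"
    and "B a b \<noteq> 0" "B a c \<noteq> 0" "B b c \<noteq> 0"
  shows "\<exists>d. B d a = 1 \<and> B d b = 1 \<and> B d c = 1"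
proof -
  define p r s where "p = B a b" and "r = B a c" and "s = B b c"
  define d where "d = ((p + r - s) / (2 * p * r)) *\<^sub>R a + ((p + s - r) / (2 * p * s)) *\<^sub>R b
    + ((r + s - p) / (2 * r * s)) *\<^sub>R c"
  have "B a a = 0" "B b b = 0" "B c c = 0" "B b a = p" "B c a = r" "B c b = s"
    using assms(1-3) q_eq symmetric by (auto simp: p_def r_def s_def)
  then have "B d a = 1 \<and> B d b = 1 \<and> B d c = 1"
    using assms(4-6)
    by (simp add: d_def B_add_left B_scaleR_left p_def[symmetric] r_def[symmetric]
        s_def[symmetric] field_simps)
  then show ?thesis by blast
qed

lemma exists_anisotropic_dual:
  assumes "B d a = 1" "B d b = 1" "B d c = 1"
    and "q w \<noteq> 0" "B w a = 0" "B w b = 0" "B w c = 0"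
  shows "\<exists>d'. q d' \<noteq> 0 \<and> B d' a = 1 \<and> B d' b = 1 \<and> B d' c = 1"
proof -
  have "q (d + w) + q (d - w) = 2 * q d + 2 * q w"
    by (simp add: q_add q_diff)
  then have "q d \<noteq> 0 \<or> q (d + w) \<noteq> 0 \<or> q (d - w) \<noteq> 0"
    using assms(4) by auto
  then show ?thesis
    using assms by (auto simp: B_add_left B_diff_left)
qed

lemma isotropic_diff_rescaled:
  assumes "q d \<noteq> 0" "B d x = 1" "q x = 0"
  shows "q ((2 / q d) *\<^sub>R d - x) = 0"
  using assms by (simp add: q_diff q_scaleR B_scaleR_left power2_eq_square)

end

locale lorentzian_form = symmetric_bilinear_form q B
  for q :: "'a::real_vector \<Rightarrow> real" and B +
  fixes e :: "nat \<Rightarrow> 'a" and n :: nat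
  assumes q_coordinates:
      "\<And>x. q (\<Sum>i<n. x i *\<^sub>R e i) = (x 0)\<^sup>2 - (\<Sum>i\<in>{1..<n}. (x i)\<^sup>2)"
    and coordinates_exist: "\<And>v. \<exists>x. v = (\<Sum>i<n. x i *\<^sub>R e i)"
begin

lemma isotropic_time_coordinate_eq_0:
  assumes "q (\<Sum>i<n. x i *\<^sub>R e i) = 0" "x 0 = 0"
  shows "(\<Sum>i<n. x i *\<^sub>R e i) = 0"
proof -
  have "(\<Sum>i\<in>{1..<n}. (x i)\<^sup>2) = 0"
    using assms q_coordinates[of x] by simp
  then have "\<forall>i\<in>{1..<n}. x i = 0"
    by (subst (asm) sum_nonneg_eq_0_iff) auto
  then have "\<forall>i<n. x i = 0"
    using assms(2) by (metis atLeastLessThan_iff less_one not_less)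
  then show ?thesis by simp
qed

lemma isotropic_orthogonal_imp_collinear:
  assumes "q u = 0" "q v = 0" "B u v = 0"
  shows "collinear {0, u, v}"
proof -
  obtain x y where u: "u = (\<Sum>i<n. x i *\<^sub>R e i)" and v: "v = (\<Sum>i<n. y i *\<^sub>R e i)"
    using coordinates_exist by meson
  define z where "z i = y 0 * x i - x 0 * y i" for i
  have z: "(\<Sum>i<n. z i *\<^sub>R e i) = y 0 *\<^sub>R u - x 0 *\<^sub>R v"
    unfolding u v z_def by (simp add: scaleR_diff_left sum_subtractf scaleR_sum_right)
  have "q (y 0 *\<^sub>R u - x 0 *\<^sub>R v) = 0"
    using assms by (simp add: q_diff q_scaleR B_scaleR_left B_scaleR_right)
  then have "y 0 *\<^sub>R u = x 0 *\<^sub>R v"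
    using isotropic_time_coordinate_eq_0[of z] z by (simp add: z_def)
  then have "v = (y 0 / x 0) *\<^sub>R u" if "x 0 \<noteq> 0"
    using that by (metis divide_inverse_commute scaleR_scaleR inverse_eq_divide
        right_inverse scaleR_one mult.commute)
  moreover have "u = 0" if "x 0 = 0"
    using isotropic_time_coordinate_eq_0[of x] assms(1) that u by simp
  ultimately show ?thesis
    by (cases "x 0 = 0") (auto simp: collinear_lemma)
qed

lemma isotropic_orthogonal_eq_0:
  assumes "q w = 0" "B w a = 0" "B w b = 0" "q a = 0" "B a b \<noteq> 0"
  shows "w = 0"
proof (rule ccontr)
  assume "w \<noteq> 0"
  moreover have "a \<noteq> 0"
    using assms(5) bilinear_lzero[OF bilinear] by metis
  moreover have "collinear {0, w, a}"
    using isotropic_orthogonal_imp_collinear[OF assms(1,4,2)] .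
  ultimately obtain k where "a = k *\<^sub>R w"
    unfolding collinear_lemma by blast
  then show False
    using assms(3,5) by (simp add: B_scaleR_left)
qed

end

lemma minkowski_space_imp_lorentzian_form:
  fixes q :: "'a::euclidean_space \<Rightarrow> real"
  assumes "minkowski_space q"
  shows "\<exists>B e. lorentzian_form q B e DIM('a)"
proof -
  obtain B where B: "symmetric_bilinear_form q B"
    using assms unfolding minkowski_space_def quadratic_form_def symmetric_bilinear_form_def
    by blast
  obtain e :: "nat \<Rightarrow> 'a" where "inj_on e {..<DIM('a)}"
    and "span (e ` {..<DIM('a)}) = UNIV"
    and "\<And>x. q (\<Sum>i<DIM('a). x i *\<^sub>R e i) = (x 0)\<^sup>2 - (\<Sum>i\<in>{1..<DIM('a)}. (x i)\<^sup>2)"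
    using assms unfolding minkowski_space_def signature_1_nm1_def by blast
  then have "lorentzian_form q B e DIM('a)"
    using B span_eq_UNIV_imp_coordinates
    by (intro lorentzian_form.intro lorentzian_form_axioms.intro) blast+
  then show ?thesis by blast
qed

theorem lemma2p4:
  fixes q :: "'a::euclidean_space \<Rightarrow> real" and a b c :: 'a
  assumes "minkowski_space q"
    and "DIM('a) > 3"
    and "a \<in> light_cone q" and "b \<in> light_cone q" and "c \<in> light_cone q"
    and "\<not> collinear {0, a, b}" and "\<not> collinear {0, a, c}" and "\<not> collinear {0, b, c}"
  shows "\<exists>d. d \<notin> light_cone q \<and> q (d - a) = 0 \<and> q (d - b) = 0 \<and> q (d - c) = 0"
proof -
  obtain B e where "lorentzian_form q B e DIM('a)"
    using minkowski_space_imp_lorentzian_form assms(1) by blast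
  then interpret lorentzian_form q B e "DIM('a)" .
  have iso: "q a = 0" "q b = 0" "q c = 0"
    using assms(3-5) by (auto simp: light_cone_def)
  have nonorth: "B a b \<noteq> 0" "B a c \<noteq> 0" "B b c \<noteq> 0"
    using isotropic_orthogonal_imp_collinear[of a b] isotropic_orthogonal_imp_collinear[of a c]
      isotropic_orthogonal_imp_collinear[of b c] iso assms(6-8) by auto
  obtain d where d: "B d a = 1" "B d b = 1" "B d c = 1"
    using exists_dual_to_isotropic_triple[OF iso nonorth] by blast
  obtain w where w: "w \<noteq> 0" "B w a = 0" "B w b = 0" "B w c = 0"
    using bilinear_exists_orthogonal_to_three[OF bilinear assms(2)] by blast
  then have "q w \<noteq> 0"
    using isotropic_orthogonal_eq_0[of w a b] iso(1) nonorth(1) by blast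
  then obtain d' where d': "q d' \<noteq> 0" "B d' a = 1" "B d' b = 1" "B d' c = 1"
    using exists_anisotropic_dual[OF d] w by blast
  have "q ((2 / q d') *\<^sub>R d') \<noteq> 0"
    using d'(1) by (simp add: q_scaleR)
  then show ?thesis
    using isotropic_diff_rescaled[of d'] d' iso unfolding light_cone_def by auto
qed

end
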